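(* Let $X$ be a finite-dimensional real Hilbert space and $J:X\to \mathbb{R}$ a $C^1$ function. Set $$\eta=\liminf_{\|x\|\to +\infty}\frac{J(x)}{\|x\|^2}$$ and $$\theta=\inf\left\{\frac{J(x)-J(u)}{\|x-u\|^2} : (u,x)\in M_J\times X,\ x\neq u\right\},$$ where $M_J$ denotes the set of all global minima of $J$. Assume that $\theta<\eta$. Then, for each $\mu\in\,]2\theta,2\eta[$, there exists $y_\mu\in X$ such that the equation $$J'(x)-\mu x=y_\mu$$ has at least three solutions $x\in X$.
   Context: The derivative $J'(x)$ is identified with an element of $X$ via the inner product (Riesz representation). The infimum of the empty set is $+\infty$. *)

theory Defs
  imports "HOL-Analysis.Analysis"
begin

definition global_minima :: "('a \<Rightarrow> real) \<Rightarrow> 'a set" where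
  "global_minima J = {u. \<forall>x. J u \<le> J x}"

definition eta_const :: "('a::real_normed_vector \<Rightarrow> real) \<Rightarrow> ereal" where
  "eta_const J = Liminf at_infinity (\<lambda>x. ereal (J x / (norm x)^2))"

text \<open>theta; the infimum of the empty set is +infinity (ereal top).\<close>
definition theta_const :: "('a::real_normed_vector \<Rightarrow> real) \<Rightarrow> ereal" where
  "theta_const J = Inf {ereal ((J x - J u) / (norm (x - u))^2) | u x. u \<in> global_minima J \<and> x \<noteq> u}"

end

theory Submission
  imports Defs "HOL-Homology.Invariance_of_Domain"
begin

text \<open>
  Suppose that every equation \<open>J' x - \<mu> x = y\<close> had at most two solutions. Since \<open>\<mu>/2 < \<eta>\<close>, the
  tilted functional \<open>x \<mapsto> J x - \<mu>/2 \<parallel>x\<parallel>\<^sup>2 - \<langle>y, x\<rangle>\<close> is coercive, so it attains its minimum, and its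
  critical points are exactly the solutions of the equation. Two distinct global minimizers would
  produce a third critical point by the mountain pass theorem, so the minimizer \<open>g y\<close> is unique.
  It depends continuously on \<open>y\<close> and is a right inverse of \<open>J' - \<mu> id\<close>; by invariance of domain
  its range is open, and it is also closed, so \<open>g\<close> is onto. Hence every point, in particular a
  global minimum \<open>u\<close> of \<open>J\<close>, minimizes its own tilted functional, which for \<open>u\<close> says exactly
  \<open>J x - J u \<ge> \<mu>/2 \<parallel>x - u\<parallel>\<^sup>2\<close>, i.e. \<open>\<theta> \<ge> \<mu>/2\<close>.
\<close>

lemma gradient_zero_at_global_min:
  fixes f :: "'a::real_inner \<Rightarrow> real"
  assumes "(f has_derivative (\<lambda>h. G \<bullet> h)) (at x)" and "\<And>y. f x \<le> f y"
  shows "G = 0"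
proof -
  have "(\<lambda>h. G \<bullet> h) = (\<lambda>h. 0)"
    by (rule differential_zero_maxmin[of x UNIV f]) (use assms in auto)
  then have "G \<bullet> G = 0" by meson
  then show ?thesis by simp
qed

lemma gradient_step_estimate:
  fixes f :: "'a::real_inner \<Rightarrow> real"
  assumes der: "\<And>z. (f has_derivative (\<lambda>h. G z \<bullet> h)) (at z)"
    and "0 \<le> s"
    and near: "\<And>z. z \<in> closed_segment x (x - s *\<^sub>R G x) \<Longrightarrow> norm (G z - G x) \<le> \<epsilon>"
  shows "f (x - s *\<^sub>R G x) \<le> f x - s * (norm (G x))\<^sup>2 + s * \<epsilon> * norm (G x)"
proof -
  define v where "v = G x"
  define y where "y = x - s *\<^sub>R v"
  define \<phi> where "\<phi> = (\<lambda>z. f z - v \<bullet> z)"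
  have der_\<phi>: "(\<phi> has_derivative (\<lambda>h. (G z - v) \<bullet> h)) (at z within closed_segment x y)" for z
    unfolding \<phi>_def
    by (rule has_derivative_at_withinI, rule has_derivative_eq_rhs,
        (rule derivative_eq_intros der)+, auto simp: inner_diff_left)
  have onorm_\<phi>: "onorm (\<lambda>h. (G z - v) \<bullet> h) \<le> \<epsilon>" if "z \<in> closed_segment x y" for z
  proof -
    have "onorm (\<lambda>h. (G z - v) \<bullet> h) \<le> norm (G z - v) * onorm (\<lambda>h::'a. h)"
      by (rule onorm_inner_right[OF bounded_linear_ident])
    also have "\<dots> \<le> norm (G z - v)"
      by (rule mult_left_le[OF onorm_id_le norm_ge_zero])
    also have "\<dots> \<le> \<epsilon>"
      using near that unfolding v_def y_def by blast
    finally show ?thesis .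
  qed
  have "norm (\<phi> y - \<phi> x) \<le> \<epsilon> * norm (y - x)"
    by (rule differentiable_bound[OF convex_closed_segment der_\<phi> onorm_\<phi>]) auto
  moreover have "norm (y - x) = s * norm v"
    using \<open>0 \<le> s\<close> by (simp add: y_def)
  ultimately have "\<phi> y - \<phi> x \<le> \<epsilon> * (s * norm v)"
    by (simp add: abs_le_iff)
  moreover have "\<phi> y - \<phi> x = f y - f x + s * (norm v)\<^sup>2"
    unfolding \<phi>_def y_def by (simp add: inner_diff_right power2_norm_eq_inner)
  ultimately have "f y \<le> f x - s * (norm v)\<^sup>2 + \<epsilon> * (s * norm v)"
    by linarith
  then show ?thesis
    unfolding y_def v_def by (simp add: mult.commute mult.left_commute)
qed

lemma uniform_gradient_step:
  fixes f :: "'a::{real_inner, heine_borel} \<Rightarrow> real"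
  assumes der: "\<And>x. (f has_derivative (\<lambda>h. G x \<bullet> h)) (at x)"
    and contG: "continuous_on UNIV G" and "bounded R" and "\<epsilon> > 0"
  obtains M \<sigma> where "M > 0" "\<sigma> > 0" "\<And>x. x \<in> R \<Longrightarrow> norm (G x) \<le> M"
    "\<And>x s. x \<in> R \<Longrightarrow> 0 \<le> s \<Longrightarrow> s \<le> \<sigma> \<Longrightarrow>
       f (x - s *\<^sub>R G x) \<le> f x - s * (norm (G x))\<^sup>2 + s * \<epsilon> * norm (G x)"
proof -
  obtain \<rho> where \<rho>: "\<And>x. x \<in> R \<Longrightarrow> norm x \<le> \<rho>"
    using \<open>bounded R\<close> unfolding bounded_iff by blast
  define B where "B = cball (0::'a) (\<rho> + 1)"
  have "compact (G ` B)"
    unfolding B_def by (intro compact_continuous_image continuous_on_subset[OF contG]) auto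
  then have "bounded (G ` B)" by (rule compact_imp_bounded)
  then obtain M where "M > 0" and "\<forall>y\<in>G ` B. norm y \<le> M"
    unfolding bounded_pos by blast
  then have M: "\<And>x. x \<in> B \<Longrightarrow> norm (G x) \<le> M" by blast
  have "uniformly_continuous_on B G"
    unfolding B_def by (intro compact_uniformly_continuous continuous_on_subset[OF contG]) auto
  then obtain \<eta> where "\<eta> > 0"
    and \<eta>: "\<And>x z. x \<in> B \<Longrightarrow> z \<in> B \<Longrightarrow> dist z x < \<eta> \<Longrightarrow> dist (G z) (G x) < \<epsilon>"
    using \<open>\<epsilon> > 0\<close> unfolding uniformly_continuous_on_def by blast
  define \<sigma> where "\<sigma> = min 1 \<eta> / (2 * M)"
  have "\<sigma> > 0" using \<open>M > 0\<close> \<open>\<eta> > 0\<close> by (simp add: \<sigma>_def)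
  have \<sigma>M: "\<sigma> * M = min 1 \<eta> / 2" using \<open>M > 0\<close> by (simp add: \<sigma>_def)
  show thesis
  proof (rule that[OF \<open>M > 0\<close> \<open>\<sigma> > 0\<close>])
    show "norm (G x) \<le> M" if "x \<in> R" for x
      using M \<rho>[OF that] by (simp add: B_def)
  next
    fix x s assume "x \<in> R" "0 \<le> s" "s \<le> \<sigma>"
    have xB: "x \<in> B" using \<rho>[OF \<open>x \<in> R\<close>] by (simp add: B_def)
    show "f (x - s *\<^sub>R G x) \<le> f x - s * (norm (G x))\<^sup>2 + s * \<epsilon> * norm (G x)"
    proof (rule gradient_step_estimate[OF der \<open>0 \<le> s\<close>])
      fix z assume "z \<in> closed_segment x (x - s *\<^sub>R G x)"
      then have "dist z x \<le> s * norm (G x)"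
        using segment_bound1[of z x "x - s *\<^sub>R G x"] \<open>0 \<le> s\<close> by (simp add: dist_norm)
      also have "\<dots> \<le> \<sigma> * M"
        using M[OF xB] \<open>0 \<le> s\<close> \<open>s \<le> \<sigma>\<close> by (intro mult_mono) auto
      finally have dz: "dist z x \<le> min 1 \<eta> / 2" using \<sigma>M by simp
      have "norm z \<le> norm x + dist z x"
        by (metis dist_norm norm_triangle_sub add.commute)
      then have "z \<in> B" using dz \<rho>[OF \<open>x \<in> R\<close>] by (simp add: B_def)
      then have "dist (G z) (G x) < \<epsilon>"
        using \<eta>[OF xB] dz \<open>\<eta> > 0\<close> by simp
      then show "norm (G z - G x) \<le> \<epsilon>" by (simp add: dist_norm)
    qed
  qed
qed

lemma compact_norm_bounded_below:
  fixes G :: "'a::topological_space \<Rightarrow> 'b::real_normed_vector"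
  assumes "compact Q" and "continuous_on Q G" and "\<And>x. x \<in> Q \<Longrightarrow> G x \<noteq> 0"
  obtains \<delta> where "\<delta> > 0" "\<And>x. x \<in> Q \<Longrightarrow> \<delta> \<le> norm (G x)"
proof (cases "Q = {}")
  case False
  have "continuous_on Q (\<lambda>x. norm (G x))"
    using assms(2) by (rule continuous_on_norm)
  then obtain z where "z \<in> Q" and "\<And>x. x \<in> Q \<Longrightarrow> norm (G z) \<le> norm (G x)"
    using continuous_attains_inf[OF \<open>compact Q\<close> False] by blast
  then show thesis using that[of "norm (G z)"] assms(3) by auto
qed (use that[of 1] in auto)

lemma step_gain_lower_bound:
  fixes \<delta> n s :: real
  assumes "0 < \<delta>" "\<delta> \<le> n" "0 \<le> s"
  shows "s * \<delta>\<^sup>2 / 2 \<le> s * n\<^sup>2 - s * (\<delta>/2) * n"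
proof -
  have "0 \<le> (n - \<delta>) * (n + \<delta>/2)"
    using assms by (intro mult_nonneg_nonneg) auto
  also have "\<dots> = n\<^sup>2 - \<delta>/2 * n - \<delta>\<^sup>2 / 2"
    by (simp add: field_simps power2_eq_square)
  finally have "s * (\<delta>\<^sup>2 / 2) \<le> s * (n\<^sup>2 - \<delta>/2 * n)"
    using \<open>0 \<le> s\<close> by (intro mult_left_mono) auto
  then show ?thesis
    by (simp add: right_diff_distrib mult.assoc)
qed

lemma deformation_lemma:
  fixes f :: "'a::{real_inner, heine_borel} \<Rightarrow> real"
  assumes der: "\<And>x. (f has_derivative (\<lambda>h. G x \<bullet> h)) (at x)"
    and contG: "continuous_on UNIV G"
    and coercive: "\<And>t. bounded {x. f x \<le> t}"
    and "d > 0"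
    and no_crit: "\<And>x. c - d \<le> f x \<Longrightarrow> f x \<le> c + 1 \<Longrightarrow> G x \<noteq> 0"
  obtains s e where "e > 0" "\<And>x. f x \<le> c + e \<Longrightarrow> f (x - s *\<^sub>R G x) \<le> c - e"
proof -
  have contf: "continuous_on UNIV f"
    using der by (meson continuous_at_imp_continuous_on has_derivative_continuous)
  define Q where "Q = {x. f x \<le> c + 1} \<inter> {x. c - d \<le> f x}"
  have "compact Q"
    unfolding Q_def using coercive
    by (intro compact_Int_closed) (auto simp: compact_eq_bounded_closed
        intro!: closed_Collect_le contf continuous_on_const)
  moreover have "continuous_on Q G" using contG by (rule continuous_on_subset) simp
  moreover have "G x \<noteq> 0" if "x \<in> Q" for x using no_crit that by (simp add: Q_def)
  ultimately obtain \<delta> where "\<delta> > 0" and \<delta>: "\<And>x. x \<in> Q \<Longrightarrow> \<delta> \<le> norm (G x)"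
    using compact_norm_bounded_below by blast
  obtain M \<sigma> where "M > 0" "\<sigma> > 0" and M: "\<And>x. f x \<le> c + 1 \<Longrightarrow> norm (G x) \<le> M"
    and step: "\<And>x s. f x \<le> c + 1 \<Longrightarrow> 0 \<le> s \<Longrightarrow> s \<le> \<sigma> \<Longrightarrow>
       f (x - s *\<^sub>R G x) \<le> f x - s * (norm (G x))\<^sup>2 + s * (\<delta>/2) * norm (G x)"
    using uniform_gradient_step[OF der contG coercive, of "\<delta>/2" "c + 1"] \<open>\<delta> > 0\<close> by auto
  define s where "s = min \<sigma> (d / (\<delta> * M))"
  define e where "e = min (d/2) (min 1 (s * \<delta>\<^sup>2 / 4))"
  have "s > 0" using \<open>\<sigma> > 0\<close> \<open>d > 0\<close> \<open>\<delta> > 0\<close> \<open>M > 0\<close> by (simp add: s_def)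
  have "s \<le> d / (\<delta> * M)" by (simp add: s_def)
  then have "s * \<delta> * M \<le> d"
    using \<open>\<delta> > 0\<close> \<open>M > 0\<close> by (simp add: pos_le_divide_eq mult.assoc)
  \<comment> \<open>The step lowers \<open>f\<close> by at least \<open>s \<delta>\<^sup>2/2\<close> on the strip \<open>c - d \<le> f \<le> c + e\<close>,
    and raises it by at most \<open>d/2\<close> below the strip.\<close>
  show thesis
  proof (rule that)
    show "e > 0" using \<open>d > 0\<close> \<open>s > 0\<close> \<open>\<delta> > 0\<close> by (simp add: e_def)
  next
    fix x assume "f x \<le> c + e"
    then have x: "f x \<le> c + 1" by (simp add: e_def)
    have descent: "f (x - s *\<^sub>R G x) \<le> f x - s * (norm (G x))\<^sup>2 + s * (\<delta>/2) * norm (G x)"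
      using step[OF x] \<open>s > 0\<close> by (simp add: s_def)
    have "e \<le> d/2" "e \<le> s * \<delta>\<^sup>2 / 4" by (simp_all add: e_def)
    show "f (x - s *\<^sub>R G x) \<le> c - e"
    proof (cases "c - d \<le> f x")
      case True
      then have "\<delta> \<le> norm (G x)" using \<delta> x by (simp add: Q_def)
      then have "s * \<delta>\<^sup>2 / 2 \<le> s * (norm (G x))\<^sup>2 - s * (\<delta>/2) * norm (G x)"
        using \<open>\<delta> > 0\<close> \<open>s > 0\<close> by (intro step_gain_lower_bound) auto
      then show ?thesis
        using descent \<open>f x \<le> c + e\<close> \<open>e \<le> s * \<delta>\<^sup>2 / 4\<close> by linarith
    next
      case False
      have "s * (\<delta>/2) * norm (G x) \<le> s * (\<delta>/2) * M"
        using M[OF x] \<open>s > 0\<close> \<open>\<delta> > 0\<close> by (intro mult_left_mono) auto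
      also have "\<dots> \<le> d/2"
        using \<open>s * \<delta> * M \<le> d\<close> by simp
      finally have "s * (\<delta>/2) * norm (G x) \<le> d/2" .
      moreover have "0 \<le> s * (norm (G x))\<^sup>2" using \<open>s > 0\<close> by simp
      ultimately show ?thesis
        using descent False \<open>e \<le> d/2\<close> by linarith
    qed
  qed
qed

text \<open>The mountain pass level between \<open>a\<close> and \<open>b\<close> is the infimum of this set.\<close>

definition connecting_levels :: "('a::topological_space \<Rightarrow> real) \<Rightarrow> 'a \<Rightarrow> 'a \<Rightarrow> real set" where
  "connecting_levels f a b = {t. \<exists>K. connected K \<and> a \<in> K \<and> b \<in> K \<and> (\<forall>x\<in>K. f x \<le> t)}"

lemma connecting_levels_image:
  assumes "t \<in> connecting_levels f a b" and "continuous_on UNIV D" and "D a = a" "D b = b"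
    and "\<And>x. f x \<le> t \<Longrightarrow> f (D x) \<le> t'"
  shows "t' \<in> connecting_levels f a b"
proof -
  obtain K where K: "connected K" "a \<in> K" "b \<in> K" "\<forall>x\<in>K. f x \<le> t"
    using assms(1) unfolding connecting_levels_def by blast
  have "connected (D ` K)"
    using connected_continuous_image[OF continuous_on_subset[OF assms(2)] K(1)] by simp
  moreover have "a \<in> D ` K" "b \<in> D ` K"
    using K(2,3) assms(3,4) by (metis image_eqI)+
  ultimately show ?thesis
    using K(4) assms(5) unfolding connecting_levels_def by blast
qed

lemma connecting_levels_nonempty:
  fixes f :: "'a::real_normed_vector \<Rightarrow> real"
  assumes "continuous_on UNIV f"
  shows "connecting_levels f a b \<noteq> {}"
proof -
  have "closed_segment a b \<noteq> {}" by auto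
  then obtain z where "\<forall>y\<in>closed_segment a b. f y \<le> f z"
    using continuous_attains_sup[OF compact_segment _ continuous_on_subset[OF assms subset_UNIV]]
    by blast
  then have "f z \<in> connecting_levels f a b"
    unfolding connecting_levels_def
    by (intro CollectI exI[of _ "closed_segment a b"]) (auto intro: convex_connected)
  then show ?thesis by blast
qed

lemma min_less_Inf_connecting_levels:
  fixes f :: "'a::real_normed_vector \<Rightarrow> real"
  assumes contf: "continuous_on UNIV f" and comp: "\<And>t. compact {x. f x \<le> t}"
    and "a \<noteq> b" and only: "\<And>x. f x \<le> f a \<Longrightarrow> x = a \<or> x = b"
  shows "f a < Inf (connecting_levels f a b)"
proof -
  define r where "r = dist a b / 2"
  have "r > 0" using \<open>a \<noteq> b\<close> by (simp add: r_def)
  have disj: "ball a r \<inter> ball b r = {}"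
    by (rule disjoint_ballI) (simp add: r_def)
  define S where "S = {x. f x \<le> f a + 1} - (ball a r \<union> ball b r)"
  have "compact S" unfolding S_def by (intro compact_diff comp) auto
  obtain m where "f a < m" and m: "\<And>x. x \<in> S \<Longrightarrow> m \<le> f x"
  proof (cases "S = {}")
    case False
    then obtain z where "z \<in> S" and z: "\<And>x. x \<in> S \<Longrightarrow> f z \<le> f x"
      using continuous_attains_inf[OF \<open>compact S\<close> False continuous_on_subset[OF contf]] by blast
    have "f a < f z"
      using only[of z] \<open>z \<in> S\<close> \<open>r > 0\<close> by (force simp: S_def)
    then show thesis using that z by blast
  qed (use that[of "f a + 1"] in auto)
  have "min m (f a + 1) \<le> t" if "t \<in> connecting_levels f a b" for t
  proof (rule ccontr)
    assume "\<not> min m (f a + 1) \<le> t"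
    obtain K where K: "connected K" "a \<in> K" "b \<in> K" "\<forall>x\<in>K. f x \<le> t"
      using \<open>t \<in> connecting_levels f a b\<close> unfolding connecting_levels_def by blast
    have "K \<subseteq> ball a r \<union> ball b r"
      using K(4) m \<open>\<not> min m (f a + 1) \<le> t\<close> by (force simp: S_def)
    moreover have "ball a r \<inter> ball b r \<inter> K = {}" using disj by blast
    ultimately have "ball a r \<inter> K = {} \<or> ball b r \<inter> K = {}"
      using connectedD[OF K(1)] by blast
    then show False using K \<open>r > 0\<close> by (metis centre_in_ball disjoint_iff)
  qed
  then have "min m (f a + 1) \<le> Inf (connecting_levels f a b)"
    by (intro cInf_greatest connecting_levels_nonempty contf)
  then show ?thesis using \<open>f a < m\<close> by linarith
qed

lemma mountain_pass_two_minima: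
  fixes f :: "'a::{real_inner, heine_borel} \<Rightarrow> real"
  assumes der: "\<And>x. (f has_derivative (\<lambda>h. G x \<bullet> h)) (at x)"
    and contG: "continuous_on UNIV G"
    and coercive: "\<And>t. bounded {x. f x \<le> t}"
    and "a \<noteq> b" and min_a: "\<And>x. f a \<le> f x" and min_b: "\<And>x. f b \<le> f x"
  shows "\<exists>x. G x = 0 \<and> x \<noteq> a \<and> x \<noteq> b"
proof (rule ccontr)
  assume "\<nexists>x. G x = 0 \<and> x \<noteq> a \<and> x \<noteq> b"
  then have crit: "\<And>x. G x = 0 \<Longrightarrow> x = a \<or> x = b" by blast
  have contf: "continuous_on UNIV f"
    using der by (meson continuous_at_imp_continuous_on has_derivative_continuous)
  have min_crit: "G x = 0" if "\<And>y. f x \<le> f y" for x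
    using gradient_zero_at_global_min[OF der that] .
  have "f b = f a" using min_a min_b by (meson antisym)
  have comp: "compact {x. f x \<le> t}" for t
    using coercive closed_Collect_le[OF contf continuous_on_const]
    by (simp add: compact_eq_bounded_closed)
  have only: "x = a \<or> x = b" if "f x \<le> f a" for x
    using crit min_crit min_a that order_trans by blast
  define c where "c = Inf (connecting_levels f a b)"
  have "f a < c"
    unfolding c_def by (intro min_less_Inf_connecting_levels contf comp \<open>a \<noteq> b\<close> only)
  have gap: "(c - f a) / 2 > 0" using \<open>f a < c\<close> by simp
  have no_crit: "G x \<noteq> 0" if "c - (c - f a) / 2 \<le> f x" for x
  proof
    assume "G x = 0"
    then have "f x = f a" using crit \<open>f b = f a\<close> by auto
    then show False using that \<open>f a < c\<close> by (simp add: field_simps)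
  qed
  obtain s e where "e > 0" and deform: "\<And>x. f x \<le> c + e \<Longrightarrow> f (x - s *\<^sub>R G x) \<le> c - e"
    using deformation_lemma[OF der contG coercive gap, of c] no_crit by blast
  have levels: "connecting_levels f a b \<noteq> {}"
    by (rule connecting_levels_nonempty[OF contf])
  have bdd: "bdd_below (connecting_levels f a b)"
    using min_a by (intro bdd_belowI[of _ "f a"]) (auto simp: connecting_levels_def)
  then obtain t where "t \<in> connecting_levels f a b" "t < c + e"
    using cInf_less_iff[OF levels, of "c + e"] \<open>e > 0\<close> unfolding c_def by auto
  have "c - e \<in> connecting_levels f a b"
  proof (rule connecting_levels_image[where D = "\<lambda>x. x - s *\<^sub>R G x"])
    show "continuous_on UNIV (\<lambda>x. x - s *\<^sub>R G x)"
      by (intro continuous_intros contG)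
    show "a - s *\<^sub>R G a = a" "b - s *\<^sub>R G b = b"
      using min_crit min_a min_b by simp_all
  qed (use \<open>t \<in> _\<close> \<open>t < c + e\<close> deform in auto)
  then have "c \<le> c - e"
    unfolding c_def using bdd by (rule cInf_lower)
  then show False using \<open>e > 0\<close> by simp
qed

lemma coercive_attains_min:
  fixes f :: "'a::{real_normed_vector, heine_borel} \<Rightarrow> real"
  assumes contf: "continuous_on UNIV f" and coercive: "\<And>t. bounded {x. f x \<le> t}"
  obtains x where "\<And>y. f x \<le> f y"
proof -
  define S where "S = {x. f x \<le> f 0}"
  have "compact S"
    unfolding S_def using coercive closed_Collect_le[OF contf continuous_on_const]
    by (simp add: compact_eq_bounded_closed)
  moreover have "S \<noteq> {}" by (auto simp: S_def)
  ultimately obtain z where "z \<in> S" and "\<forall>y\<in>S. f z \<le> f y"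
    using continuous_attains_inf continuous_on_subset[OF contf subset_UNIV] by metis
  then have "f z \<le> f y" for y by (cases "y \<in> S") (auto simp: S_def)
  then show thesis by (rule that)
qed

lemma coercive_unique_global_min:
  fixes f :: "'a::{real_inner, heine_borel} \<Rightarrow> real"
  assumes der: "\<And>x. (f has_derivative (\<lambda>h. G x \<bullet> h)) (at x)"
    and contG: "continuous_on UNIV G"
    and coercive: "\<And>t. bounded {x. f x \<le> t}"
    and at_most_two: "\<And>x1 x2 x3. G x1 = 0 \<Longrightarrow> G x2 = 0 \<Longrightarrow> G x3 = 0 \<Longrightarrow>
      x1 = x2 \<or> x1 = x3 \<or> x2 = x3"
  shows "\<exists>!x. \<forall>y. f x \<le> f y"
proof -
  have contf: "continuous_on UNIV f"
    using der by (meson continuous_at_imp_continuous_on has_derivative_continuous)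
  obtain a where min_a: "\<And>y. f a \<le> f y"
    using coercive_attains_min[OF contf coercive] by blast
  moreover have "b = a" if min_b: "\<forall>y. f b \<le> f y" for b
  proof (rule ccontr)
    assume "b \<noteq> a"
    then obtain x where "G x = 0" "x \<noteq> a" "x \<noteq> b"
      using mountain_pass_two_minima[OF der contG coercive _ min_a, of b] \<open>b \<noteq> a\<close> min_b by auto
    moreover have "G a = 0" "G b = 0"
      using gradient_zero_at_global_min[OF der] min_a min_b by blast+
    ultimately show False using at_most_two[of a b x] \<open>b \<noteq> a\<close> by auto
  qed
  ultimately show ?thesis by blast
qed

lemma quadratic_growth_below_eta:
  fixes J :: "'a::{real_normed_vector, heine_borel} \<Rightarrow> real"
  assumes contJ: "continuous_on UNIV J" and "ereal a < eta_const J"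
  obtains k C where "k > 0" "\<And>x. (a + k) * (norm x)\<^sup>2 - C \<le> J x"
proof -
  obtain c where "ereal a < ereal c" "ereal c < eta_const J"
    using ereal_dense2[OF assms(2)] by blast
  then have "a < c" by simp
  have "eventually (\<lambda>x. ereal c < ereal (J x / (norm x)\<^sup>2)) at_infinity"
    using less_LiminfD \<open>ereal c < eta_const J\<close> unfolding eta_const_def by blast
  then obtain R where R: "\<And>x. R \<le> norm x \<Longrightarrow> c < J x / (norm x)\<^sup>2"
    unfolding eventually_at_infinity by auto
  define r where "r = max R 1"
  have "cball (0::'a) r \<noteq> {}" by (simp add: r_def)
  then obtain z where "\<forall>x\<in>cball 0 r. J z \<le> J x"
    using continuous_attains_inf[OF compact_cball _ continuous_on_subset[OF contJ subset_UNIV]]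
    by blast
  then have m: "J z \<le> J x" if "norm x \<le> r" for x using that by simp
  show thesis
  proof (rule that)
    show "c - a > 0" using \<open>a < c\<close> by simp
    show "(a + (c - a)) * (norm x)\<^sup>2 - (\<bar>J z\<bar> + \<bar>c\<bar> * r\<^sup>2) \<le> J x" for x
    proof (cases "norm x \<le> r")
      case True
      have "c * (norm x)\<^sup>2 \<le> \<bar>c\<bar> * (norm x)\<^sup>2" by (simp add: mult_right_mono)
      also have "\<dots> \<le> \<bar>c\<bar> * r\<^sup>2" using True by (simp add: mult_left_mono power_mono)
      finally show ?thesis using m[OF True] by simp
    next
      case False
      then have "R \<le> norm x" "norm x > 0" by (auto simp: r_def)
      then have "c * (norm x)\<^sup>2 < J x" using R by (simp add: less_divide_eq)
      moreover have "0 \<le> \<bar>J z\<bar> + \<bar>c\<bar> * r\<^sup>2" by simp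
      moreover have "(a + (c - a)) * (norm x)\<^sup>2 = c * (norm x)\<^sup>2" by simp
      ultimately show ?thesis by linarith
    qed
  qed
qed

lemma continuous_on_argmin:
  fixes P :: "'b::euclidean_space \<Rightarrow> 'a::euclidean_space \<Rightarrow> real"
  assumes contP: "continuous_on UNIV (\<lambda>p. P (fst p) (snd p))"
    and argmin: "\<And>y x. (\<forall>w. P y x \<le> P y w) \<longleftrightarrow> x = g y"
    and bdd: "\<And>B. bounded B \<Longrightarrow> bounded (g ` B)"
  shows "continuous_on UNIV g"
proof (rule continuous_at_imp_continuous_on, rule ballI)
  fix y0
  have "continuous_on UNIV (\<lambda>p::'b \<times> 'a. P (fst p) w)" for w
    using continuous_on_compose2[OF contP, of UNIV "\<lambda>p::'b \<times> 'a. (fst p, w)"]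
    by (simp add: continuous_intros)
  then have "closed {p. P (fst p) (snd p) \<le> P (fst p) w}" for w
    by (intro closed_Collect_le contP)
  then have closed_min: "closed {p. \<forall>w. P (fst p) (snd p) \<le> P (fst p) w}"
    using closed_INT[of UNIV "\<lambda>w. {p. P (fst p) (snd p) \<le> P (fst p) w}"]
    by (simp add: INTER_UNIV_conv Collect_all_eq)
  have "(\<lambda>y. (y, g y)) ` cball y0 1 = (cball y0 1 \<times> UNIV) \<inter> {p. \<forall>w. P (fst p) (snd p) \<le> P (fst p) w}"
    using argmin by (auto simp: image_iff)
  then have "closed ((\<lambda>y. (y, g y)) ` cball y0 1)"
    using closed_min by (simp add: closed_Int closed_Times)
  moreover obtain B where "\<forall>x\<in>g ` cball y0 1. norm x \<le> B"
    using bdd[OF bounded_cball] unfolding bounded_iff by blast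
  then have "g \<in> cball y0 1 \<rightarrow> cball 0 B" by auto
  ultimately have "continuous_on (cball y0 1) g"
    by (intro continuous_from_closed_graph[of "cball 0 B"]) auto
  then show "isCont g y0"
    using continuous_on_interior[of "cball y0 1" g y0] by simp
qed

lemma continuous_right_inverse_imp_inj:
  fixes F g :: "'a::euclidean_space \<Rightarrow> 'a"
  assumes contF: "continuous_on UNIV F" and contg: "continuous_on UNIV g"
    and right_inv: "\<And>y. F (g y) = y"
  shows "inj F"
proof -
  have "inj g" by (metis injI right_inv)
  then have "open (range g)"
    using invariance_of_domain[OF contg open_UNIV] by simp
  moreover have "range g = {x. g (F x) = x}"
    using right_inv by (auto simp: image_iff) (metis)
  then have "closed (range g)"
    by (auto intro!: closed_Collect_eq continuous_on_compose2[OF contg contF] continuous_on_id)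
  ultimately have "range g = UNIV"
    using connected_UNIV[unfolded connected_clopen] by (simp flip: open_openin closed_closedin) blast
  then show ?thesis
    by (metis injI right_inv UNIV_I image_iff)
qed

lemma theta_const_less_ereal:
  fixes J :: "'a::real_normed_vector \<Rightarrow> real"
  assumes "theta_const J < ereal c"
  obtains u x where "u \<in> global_minima J" "x \<noteq> u" "J x - J u < c * (norm (x - u))\<^sup>2"
proof -
  obtain u x where "u \<in> global_minima J" "x \<noteq> u" "(J x - J u) / (norm (x - u))\<^sup>2 < c"
    using assms unfolding theta_const_def by (auto simp: Inf_less_iff)
  then show thesis using that by (simp add: divide_less_eq)
qed

definition tilted :: "('a::real_inner \<Rightarrow> real) \<Rightarrow> real \<Rightarrow> 'a \<Rightarrow> 'a \<Rightarrow> real" where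
  "tilted J \<mu> y x = J x - \<mu>/2 * (x \<bullet> x) - y \<bullet> x"

lemma tilted_has_derivative:
  fixes J :: "'a::real_inner \<Rightarrow> real"
  assumes "(J has_derivative (\<lambda>h. J' \<bullet> h)) (at x)"
  shows "(tilted J \<mu> y has_derivative (\<lambda>h. (J' - \<mu> *\<^sub>R x - y) \<bullet> h)) (at x)"
proof -
  have "((\<lambda>x. J x - \<mu>/2 * (x \<bullet> x) - y \<bullet> x) has_derivative
         (\<lambda>h. J' \<bullet> h - \<mu>/2 * (x \<bullet> h + h \<bullet> x) - y \<bullet> h)) (at x)"
    by (intro has_derivative_diff has_derivative_mult_right assms has_derivative_inner
        has_derivative_inner_right has_derivative_ident)
  then show ?thesis
    unfolding tilted_def[abs_def]
    by (rule has_derivative_eq_rhs) (auto simp: inner_diff_left algebra_simps inner_commute)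
qed

lemma continuous_on_tilted:
  assumes "continuous_on UNIV J"
  shows "continuous_on UNIV (\<lambda>p. tilted J \<mu> (fst p) (snd p))"
  unfolding tilted_def by (intro continuous_intros continuous_on_compose2[OF assms]) auto

lemma bounded_tilted_sublevels:
  fixes J :: "'a::real_inner \<Rightarrow> real"
  assumes "k > 0" and growth: "\<And>x. (\<mu>/2 + k) * (norm x)\<^sup>2 - C \<le> J x"
  shows "bounded {x. \<exists>y. norm y \<le> r \<and> tilted J \<mu> y x \<le> t}"
proof -
  have "norm x \<le> max 1 ((r + \<bar>t + C\<bar>) / k)" if "norm y \<le> r" "tilted J \<mu> y x \<le> t" for x y
  proof (rule ccontr)
    assume "\<not> ?thesis"
    then have "1 < norm x" and "(r + \<bar>t + C\<bar>) / k < norm x" by auto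
    then have "r + \<bar>t + C\<bar> < k * norm x"
      using \<open>k > 0\<close> by (simp add: pos_divide_less_eq mult.commute)
    have "x \<noteq> 0" using \<open>1 < norm x\<close> by auto
    then have "r * norm x + \<bar>t + C\<bar> * norm x < k * norm x * norm x"
      using mult_strict_right_mono[OF \<open>r + \<bar>t + C\<bar> < k * norm x\<close>] by (simp add: distrib_right)
    moreover have "y \<bullet> x \<le> r * norm x"
      using norm_cauchy_schwarz[of y x] \<open>norm y \<le> r\<close> by (meson mult_right_mono norm_ge_zero order_trans)
    moreover have "\<bar>t + C\<bar> \<le> \<bar>t + C\<bar> * norm x"
      using \<open>1 < norm x\<close> by (simp add: mult_le_cancel_left1)
    moreover have "(\<mu>/2 + k) * (norm x)\<^sup>2 = \<mu>/2 * (x \<bullet> x) + k * (norm x * norm x)"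
      by (simp add: dot_square_norm power2_eq_square algebra_simps)
    ultimately show False
      using growth[of x] that(2) unfolding tilted_def by linarith
  qed
  then show ?thesis unfolding bounded_iff by blast
qed

lemma tilted_unique_global_min:
  fixes J :: "'a::euclidean_space \<Rightarrow> real"
  assumes deriv: "\<And>x. (J has_derivative (\<lambda>h. J' x \<bullet> h)) (at x)"
    and cont: "continuous_on UNIV J'"
    and "k > 0" and growth: "\<And>x. (\<mu>/2 + k) * (norm x)\<^sup>2 - C \<le> J x"
    and at_most_two: "\<And>x1 x2 x3. J' x1 - \<mu> *\<^sub>R x1 = y \<Longrightarrow> J' x2 - \<mu> *\<^sub>R x2 = y \<Longrightarrow>
      J' x3 - \<mu> *\<^sub>R x3 = y \<Longrightarrow> x1 = x2 \<or> x1 = x3 \<or> x2 = x3"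
  shows "\<exists>!x. \<forall>w. tilted J \<mu> y x \<le> tilted J \<mu> y w"
proof (rule coercive_unique_global_min)
  show "(tilted J \<mu> y has_derivative (\<lambda>h. (J' x - \<mu> *\<^sub>R x - y) \<bullet> h)) (at x)" for x
    by (rule tilted_has_derivative[OF deriv])
  show "continuous_on UNIV (\<lambda>x. J' x - \<mu> *\<^sub>R x - y)"
    by (intro continuous_intros cont)
  show "bounded {x. tilted J \<mu> y x \<le> t}" for t
    using bounded_tilted_sublevels[OF \<open>k > 0\<close> growth, of "norm y" t] by (rule bounded_subset) auto
  show "x1 = x2 \<or> x1 = x3 \<or> x2 = x3"
    if "J' x1 - \<mu> *\<^sub>R x1 - y = 0" "J' x2 - \<mu> *\<^sub>R x2 - y = 0" "J' x3 - \<mu> *\<^sub>R x3 - y = 0"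
    for x1 x2 x3
    using at_most_two that by simp
qed

lemma minimizes_own_tilted:
  fixes J :: "'a::euclidean_space \<Rightarrow> real"
  assumes deriv: "\<And>x. (J has_derivative (\<lambda>h. J' x \<bullet> h)) (at x)"
    and cont: "continuous_on UNIV J'"
    and "k > 0" and growth: "\<And>x. (\<mu>/2 + k) * (norm x)\<^sup>2 - C \<le> J x"
    and at_most_two: "\<And>y x1 x2 x3. J' x1 - \<mu> *\<^sub>R x1 = y \<Longrightarrow> J' x2 - \<mu> *\<^sub>R x2 = y \<Longrightarrow>
      J' x3 - \<mu> *\<^sub>R x3 = y \<Longrightarrow> x1 = x2 \<or> x1 = x3 \<or> x2 = x3"
  shows "tilted J \<mu> (J' x - \<mu> *\<^sub>R x) x \<le> tilted J \<mu> (J' x - \<mu> *\<^sub>R x) w"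
proof -
  define F where "F = (\<lambda>x. J' x - \<mu> *\<^sub>R x)"
  have unique_min: "\<exists>!x. \<forall>w. tilted J \<mu> y x \<le> tilted J \<mu> y w" for y
    using tilted_unique_global_min[OF deriv cont \<open>k > 0\<close> growth at_most_two] .
  define g where "g y = (THE x. \<forall>w. tilted J \<mu> y x \<le> tilted J \<mu> y w)" for y
  have argmin: "(\<forall>w. tilted J \<mu> y x \<le> tilted J \<mu> y w) \<longleftrightarrow> x = g y" for y x
    using theI'[OF unique_min] the1_equality[OF unique_min] unfolding g_def by blast
  have contJ: "continuous_on UNIV J"
    using deriv by (meson continuous_at_imp_continuous_on has_derivative_continuous)
  have contg: "continuous_on UNIV g"
  proof (rule continuous_on_argmin[OF continuous_on_tilted[OF contJ] argmin])
    fix B :: "'a set" assume "bounded B"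
    then obtain r where "\<And>y. y \<in> B \<Longrightarrow> norm y \<le> r" unfolding bounded_iff by blast
    moreover have "tilted J \<mu> y (g y) \<le> tilted J \<mu> y 0" for y
      using argmin by blast
    then have "tilted J \<mu> y (g y) \<le> J 0" for y
      by (simp add: tilted_def)
    ultimately have "g ` B \<subseteq> {x. \<exists>y. norm y \<le> r \<and> tilted J \<mu> y x \<le> J 0}" by auto
    then show "bounded (g ` B)"
      using bounded_tilted_sublevels[OF \<open>k > 0\<close> growth] by (rule bounded_subset[rotated])
  qed
  have right_inv: "F (g y) = y" for y
  proof -
    have "F (g y) - y = 0"
      unfolding F_def by (rule gradient_zero_at_global_min[OF tilted_has_derivative[OF deriv]])
        (use argmin in blast)
    then show ?thesis by simp
  qed
  have "continuous_on UNIV F"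
    unfolding F_def by (intro continuous_intros cont)
  then have "inj F"
    using contg right_inv by (rule continuous_right_inverse_imp_inj)
  then have "g (F x) = x"
    using right_inv[of "F x"] by (rule injD)
  then have "\<forall>w. tilted J \<mu> (F x) x \<le> tilted J \<mu> (F x) w"
    using argmin[of "F x" x] by simp
  then show ?thesis by (simp add: F_def)
qed

lemma tilted_minimum_quadratic_gap:
  fixes J :: "'a::real_inner \<Rightarrow> real"
  assumes "tilted J \<mu> (- \<mu> *\<^sub>R u) u \<le> tilted J \<mu> (- \<mu> *\<^sub>R u) x"
  shows "\<mu>/2 * (norm (x - u))\<^sup>2 \<le> J x - J u"
proof -
  have norm_eq: "(norm (x - u))\<^sup>2 = x \<bullet> x - 2 * (u \<bullet> x) + u \<bullet> u"
    by (simp add: power2_norm_eq_inner inner_diff_left inner_diff_right inner_commute)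
  have "\<mu>/2 * (norm (x - u))\<^sup>2 = \<mu>/2 * (x \<bullet> x) - \<mu> * (u \<bullet> x) + \<mu>/2 * (u \<bullet> u)"
    unfolding norm_eq by (simp add: algebra_simps)
  then show ?thesis using assms unfolding tilted_def by simp
qed

theorem theorem1p2:
  fixes J :: "'a::euclidean_space \<Rightarrow> real" and J' :: "'a \<Rightarrow> 'a" and \<mu> :: real
  assumes deriv: "\<And>x. (J has_derivative (\<lambda>h. J' x \<bullet> h)) (at x)"
    and cont: "continuous_on UNIV J'"
    and lt: "theta_const J < eta_const J"
    and mu: "2 * theta_const J < ereal \<mu>" "ereal \<mu> < 2 * eta_const J"
  shows "\<exists>y. \<exists>x1 x2 x3. x1 \<noteq> x2 \<and> x1 \<noteq> x3 \<and> x2 \<noteq> x3 \<and>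
           J' x1 - \<mu> *\<^sub>R x1 = y \<and> J' x2 - \<mu> *\<^sub>R x2 = y \<and> J' x3 - \<mu> *\<^sub>R x3 = y"
proof (rule ccontr)
  assume at_most_two: "\<not> ?thesis"
  have contJ: "continuous_on UNIV J"
    using deriv by (meson continuous_at_imp_continuous_on has_derivative_continuous)
  have "ereal (\<mu>/2) < eta_const J" using mu(2) by (cases "eta_const J") auto
  then obtain k C where "k > 0" and growth: "\<And>x. (\<mu>/2 + k) * (norm x)\<^sup>2 - C \<le> J x"
    using quadratic_growth_below_eta[OF contJ] by blast
  have "theta_const J < ereal (\<mu>/2)" using mu(1) by (cases "theta_const J") auto
  then obtain u x where "u \<in> global_minima J" "x \<noteq> u" and gap: "J x - J u < \<mu>/2 * (norm (x - u))\<^sup>2"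
    by (rule theta_const_less_ereal)
  then have "J' u = 0"
    using gradient_zero_at_global_min[OF deriv] by (auto simp: global_minima_def)
  have "tilted J \<mu> (J' u - \<mu> *\<^sub>R u) u \<le> tilted J \<mu> (J' u - \<mu> *\<^sub>R u) x"
    by (rule minimizes_own_tilted[OF deriv cont \<open>k > 0\<close> growth])
      (use at_most_two in \<open>metis (no_types, lifting)\<close>)
  then have "\<mu>/2 * (norm (x - u))\<^sup>2 \<le> J x - J u"
    using \<open>J' u = 0\<close> by (intro tilted_minimum_quadratic_gap) simp
  with gap show False by linarith
qed

end
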